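(* Let $d$ be sufficiently large, $\delta\in(0,1)$, and let $\mathsf{ALG}$ be a deterministic first-order algorithm making $T=d^{1+\delta/6-o(1)}$ queries. Fix any $\mathbf{A}\in\{-1,1\}^{(d/2)\times d}$. Then with probability at least $1-d^{-\omega(1)}$ over independent uniform $\mathbf{v}_1,\dots,\mathbf{v}_N\in\frac1{\sqrt d}\{-1,1\}^d$, the correlation times of $\mathsf{ALG}$ run on $F_{\mathbf{A},V}$ satisfy $t_1\le t_2\le\cdots\le t_N$.
   Context: Hard function: $F_{\mathbf{A},V}(\mathbf{x})=\frac{1}{\sqrt dL}\max\{L\|\mathbf{A}\mathbf{x}\|_\infty-1,\max_{i\in[N]}(\langle\mathbf{v}_i,\mathbf{x}\rangle-i\gamma)\}$ on $\mathbb{B}^d$, with $V=(\mathbf{v}_1,\dots,\mathbf{v}_N)$, $\gamma=\log^2 d/d^{\delta/4}$, $N=d^{\delta/6}/\log^4 d$, $L=\exp(\log^5 d)$. The algorithm accesses $F$ through the oracle returning $F(\mathbf{x})$ and subgradient $\mathbf{g}(\mathbf{x})$: if the maximum is attained by $(\pm L\langle\mathbf{A}_j,\mathbf{x}\rangle-1)/(\sqrt dL)$ for some row $\mathbf{A}_j$, return $\pm\mathbf{A}_j/\sqrt d$ (correct sign) for the smallest such $j$; otherwise return $\mathbf{v}_i/(\sqrt dL)$ for the smallest $i$ attaining the maximum. Correlation time: with $\xi=2/L$, for $i\in[N]$, $t_i\in[T]\cup\{\infty\}$ is the first round in which $\mathsf{ALG}$ queries a point $\mathbf{x}_{t_i}$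 with $|\langle\mathbf{x}_{t_i},\mathbf{v}_i\rangle|\ge\gamma/4$ and $\|\mathbf{A}\mathbf{x}_{t_i}\|_\infty\le\xi$; $t_i=\infty$ if no such query exists. *)

theory Defs
  imports "HOL-Probability.Probability" "HOL-Library.Extended_Nat"
begin

text \<open>Vectors in R^d are represented as functions nat => real, only coordinates k < d matter.
  The matrix A has rows indexed by j < d div 2 and columns k < d.
  The vectors v_i are indexed by i in {1..N} (as in the paper, i in [N]).\<close>

definition ip :: "nat \<Rightarrow> (nat \<Rightarrow> real) \<Rightarrow> (nat \<Rightarrow> real) \<Rightarrow> real" where
  "ip d x y = (\<Sum>k<d. x k * y k)"

definition gam :: "real \<Rightarrow> nat \<Rightarrow> real" where
  "gam \<delta> d = (ln (real d))^2 / (real d) powr (\<delta>/4)"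

definition Nn :: "real \<Rightarrow> nat \<Rightarrow> nat" where
  "Nn \<delta> d = nat \<lfloor>(real d) powr (\<delta>/6) / (ln (real d))^4\<rfloor>"

definition LL :: "nat \<Rightarrow> real" where
  "LL d = exp ((ln (real d))^5)"

definition xi :: "nat \<Rightarrow> real" where
  "xi d = 2 / LL d"

definition row :: "(nat \<Rightarrow> nat \<Rightarrow> real) \<Rightarrow> nat \<Rightarrow> nat \<Rightarrow> real" where
  "row A j = (\<lambda>k. A j k)"

definition Ainf :: "nat \<Rightarrow> (nat \<Rightarrow> nat \<Rightarrow> real) \<Rightarrow> (nat \<Rightarrow> real) \<Rightarrow> real" where
  "Ainf d A x = Max ((\<lambda>j. \<bar>ip d (row A j) x\<bar>) ` {..<d div 2})"

definition Vmax :: "real \<Rightarrow> nat \<Rightarrow> (nat \<Rightarrow> nat \<Rightarrow> real) \<Rightarrow> (nat \<Rightarrow> real) \<Rightarrow> real" where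
  "Vmax \<delta> d V x = Max ((\<lambda>i. ip d (V i) x - real i * gam \<delta> d) ` {1..Nn \<delta> d})"

definition Fhard :: "real \<Rightarrow> nat \<Rightarrow> (nat \<Rightarrow> nat \<Rightarrow> real) \<Rightarrow> (nat \<Rightarrow> nat \<Rightarrow> real) \<Rightarrow> (nat \<Rightarrow> real) \<Rightarrow> real" where
  "Fhard \<delta> d A V x = (1 / (sqrt (real d) * LL d)) * max (LL d * Ainf d A x - 1) (Vmax \<delta> d V x)"

definition subg :: "real \<Rightarrow> nat \<Rightarrow> (nat \<Rightarrow> nat \<Rightarrow> real) \<Rightarrow> (nat \<Rightarrow> nat \<Rightarrow> real) \<Rightarrow> (nat \<Rightarrow> real) \<Rightarrow> (nat \<Rightarrow> real)" where
  "subg \<delta> d A V x =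
    (if LL d * Ainf d A x - 1 \<ge> Vmax \<delta> d V x then
       (let j = (LEAST j. j < d div 2 \<and> \<bar>ip d (row A j) x\<bar> = Ainf d A x);
            s = (if ip d (row A j) x \<ge> 0 then 1 else -1)
        in (\<lambda>k. if k < d then s * A j k / sqrt (real d) else 0))
     else
       (let i = (LEAST i. i \<in> {1..Nn \<delta> d} \<and> ip d (V i) x - real i * gam \<delta> d = Vmax \<delta> d V x)
        in (\<lambda>k. if k < d then V i k / (sqrt (real d) * LL d) else 0)))"

definition answer :: "real \<Rightarrow> nat \<Rightarrow> (nat \<Rightarrow> nat \<Rightarrow> real) \<Rightarrow> (nat \<Rightarrow> nat \<Rightarrow> real) \<Rightarrow> (nat \<Rightarrow> real) \<Rightarrow> real \<times> (nat \<Rightarrow> real)" where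
  "answer \<delta> d A V x = (Fhard \<delta> d A V x, subg \<delta> d A V x)"

text \<open>A deterministic first-order algorithm: maps the history of answer answers to the next
  query point.  The history after t queries:\<close>
fun hist :: "((real \<times> (nat \<Rightarrow> real)) list \<Rightarrow> (nat \<Rightarrow> real)) \<Rightarrow> real \<Rightarrow> nat \<Rightarrow> (nat \<Rightarrow> nat \<Rightarrow> real) \<Rightarrow> (nat \<Rightarrow> nat \<Rightarrow> real) \<Rightarrow> nat \<Rightarrow> (real \<times> (nat \<Rightarrow> real)) list" where
  "hist ALG \<delta> d A V 0 = []"
| "hist ALG \<delta> d A V (Suc t) = hist ALG \<delta> d A V t @ [answer \<delta> d A V (ALG (hist ALG \<delta> d A V t))]"

text \<open>The t-th query point (t = 1, 2, ...).\<close>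
definition query :: "((real \<times> (nat \<Rightarrow> real)) list \<Rightarrow> (nat \<Rightarrow> real)) \<Rightarrow> real \<Rightarrow> nat \<Rightarrow> (nat \<Rightarrow> nat \<Rightarrow> real) \<Rightarrow> (nat \<Rightarrow> nat \<Rightarrow> real) \<Rightarrow> nat \<Rightarrow> (nat \<Rightarrow> real)" where
  "query ALG \<delta> d A V t = ALG (hist ALG \<delta> d A V (t - 1))"

definition correlated :: "((real \<times> (nat \<Rightarrow> real)) list \<Rightarrow> (nat \<Rightarrow> real)) \<Rightarrow> real \<Rightarrow> nat \<Rightarrow> (nat \<Rightarrow> nat \<Rightarrow> real) \<Rightarrow> (nat \<Rightarrow> nat \<Rightarrow> real) \<Rightarrow> nat \<Rightarrow> nat \<Rightarrow> bool" where
  "correlated ALG \<delta> d A V i t \<longleftrightarrow>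
     (let x = query ALG \<delta> d A V t in
       \<bar>ip d x (V i)\<bar> \<ge> gam \<delta> d / 4 \<and> Ainf d A x \<le> xi d)"

definition corr_time :: "((real \<times> (nat \<Rightarrow> real)) list \<Rightarrow> (nat \<Rightarrow> real)) \<Rightarrow> nat \<Rightarrow> real \<Rightarrow> nat \<Rightarrow> (nat \<Rightarrow> nat \<Rightarrow> real) \<Rightarrow> (nat \<Rightarrow> nat \<Rightarrow> real) \<Rightarrow> nat \<Rightarrow> enat" where
  "corr_time ALG T \<delta> d A V i =
     (if \<exists>t\<in>{1..T}. correlated ALG \<delta> d A V i t
      then enat (LEAST t. t \<in> {1..T} \<and> correlated ALG \<delta> d A V i t)
      else \<infinity>)"

definition Vspace :: "real \<Rightarrow> nat \<Rightarrow> (nat \<Rightarrow> nat \<Rightarrow> real) set" where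
  "Vspace \<delta> d = PiE {1..Nn \<delta> d} (\<lambda>_. PiE {..<d} (\<lambda>_. {- 1 / sqrt (real d), 1 / sqrt (real d)}))"

definition sign_matrix :: "nat \<Rightarrow> (nat \<Rightarrow> nat \<Rightarrow> real) \<Rightarrow> bool" where
  "sign_matrix d A \<longleftrightarrow> (\<forall>j < d div 2. \<forall>k < d. A j k \<in> {-1, 1})"

definition queries_in_ball :: "nat \<Rightarrow> ((real \<times> (nat \<Rightarrow> real)) list \<Rightarrow> (nat \<Rightarrow> real)) \<Rightarrow> bool" where
  "queries_in_ball d ALG \<longleftrightarrow> (\<forall>h. (\<Sum>k<d. (ALG h k)^2) \<le> 1)"

definition ordered_times :: "((real \<times> (nat \<Rightarrow> real)) list \<Rightarrow> (nat \<Rightarrow> real)) \<Rightarrow> nat \<Rightarrow> real \<Rightarrow> nat \<Rightarrow> (nat \<Rightarrow> nat \<Rightarrow> real) \<Rightarrow> (nat \<Rightarrow> nat \<Rightarrow> real) \<Rightarrow> bool" where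
  "ordered_times ALG T \<delta> d A V \<longleftrightarrow>
     (\<forall>i. 1 \<le> i \<and> i < Nn \<delta> d \<longrightarrow> corr_time ALG T \<delta> d A V i \<le> corr_time ALG T \<delta> d A V (Suc i))"

end

theory Submission
  imports Defs
begin

text \<open>Reveal \<open>v\<^sub>1, \<dots>, v\<^sub>N\<close> one at a time. If \<open>t\<^sub>i\<^sub>+\<^sub>1 < t\<^sub>i\<close>, take the first query with
  \<open>\<parallel>Ax\<parallel>\<^sub>\<infinity> \<le> \<xi>\<close> that is \<open>\<gamma>/4\<close>-correlated with some \<open>v\<^sub>j\<close>, \<open>j \<ge> i\<close>. It comes no later than
  \<open>t\<^sub>i\<^sub>+\<^sub>1 < t\<^sub>i\<close>, so \<open>j > i\<close>. Before it, the oracle never reveals \<open>v\<^sub>i\<^sub>+\<^sub>1, \<dots>, v\<^sub>N\<close>: a query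
  with large \<open>\<parallel>Ax\<parallel>\<^sub>\<infinity>\<close> is answered by the \<open>A\<close>-part, and for a query uncorrelated with
  \<open>v\<^sub>i, \<dots>, v\<^sub>N\<close> the offsets \<open>i\<gamma>\<close> make \<open>v\<^sub>i\<close> beat every later \<open>v\<^sub>j\<close>. Hence that query is a
  function of \<open>A, v\<^sub>1, \<dots>, v\<^sub>i\<close> only, and by Hoeffding's bound over the independent \<open>v\<^sub>j\<close> it is
  correlated with \<open>v\<^sub>j\<close> with probability at most \<open>2 exp(-\<gamma>\<^sup>2d/32) = exp(-\<Omega>(\<surd>d))\<close>. A union
  bound over \<open>i, j \<le> N\<close> and the \<open>T \<le> d\<^sup>2\<close> rounds gives the claim.\<close>

lemma exp_plus_exp_minus_le: "exp a + exp (- a) \<le> 2 * exp (a\<^sup>2 / 2)" for a :: real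
proof -
  define h where "h = \<bar>a\<bar>"
  have "- (2 * h) * (1 / 2) + ln (1 + (1 / 2) * (exp (2 * h) - 1)) \<le> (2 * h)\<^sup>2 / 8"
    by (rule Hoeffdings_lemma_aux) (auto simp: h_def)
  hence "ln ((1 + exp (2 * h)) / 2) \<le> h + a\<^sup>2 / 2"
    by (simp add: h_def power2_eq_square field_simps)
  hence "(1 + exp (2 * h)) / 2 \<le> exp (h + a\<^sup>2 / 2)"
    by (metis add_pos_pos exp_gt_zero exp_le_cancel_iff exp_ln zero_less_divide_iff
        zero_less_numeral zero_less_one)
  hence "exp (- h) * ((1 + exp (2 * h)) / 2) \<le> exp (- h) * exp (h + a\<^sup>2 / 2)"
    by (intro mult_left_mono) auto
  hence "(exp (- h) + exp h) / 2 \<le> exp (a\<^sup>2 / 2)"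
    by (simp add: algebra_simps flip: exp_add)
  moreover have "exp a + exp (- a) = exp (- h) + exp h"
    by (cases "a \<ge> 0") (auto simp: h_def)
  ultimately show ?thesis
    by simp
qed

definition sign_cube :: "nat \<Rightarrow> (nat \<Rightarrow> real) set" where
  "sign_cube d = PiE {..<d} (\<lambda>_. {- 1 / sqrt (real d), 1 / sqrt (real d)})"

lemma Vspace_eq_PiE_sign_cube: "Vspace \<delta> d = PiE {1..Nn \<delta> d} (\<lambda>_. sign_cube d)"
  by (simp add: Vspace_def sign_cube_def)

lemma finite_sign_cube: "finite (sign_cube d)"
  unfolding sign_cube_def by (intro finite_PiE) auto

lemma card_sign_cube: "d > 0 \<Longrightarrow> card (sign_cube d) = 2 ^ d"
  unfolding sign_cube_def by (simp add: card_PiE numeral_2_eq_2)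

lemma sum_squares_sign_cube:
  assumes "w \<in> sign_cube d" "d > 0"
  shows "(\<Sum>k<d. (w k)\<^sup>2) = 1"
proof -
  have "(w k)\<^sup>2 = 1 / d" if "k < d" for k
  proof -
    have "w k \<in> {- 1 / sqrt (real d), 1 / sqrt (real d)}"
      using assms that by (auto simp: sign_cube_def PiE_iff)
    thus ?thesis
      using assms by (auto simp: power_divide)
  qed
  hence "(\<Sum>k<d. (w k)\<^sup>2) = (\<Sum>k<d. 1 / real d)"
    by (intro sum.cong) auto
  thus ?thesis
    using assms by simp
qed

lemma sum_sign_cube_exp_ip:
  assumes "d > 0"
  shows "(\<Sum>w\<in>sign_cube d. exp (l * ip d y w))
    = (\<Prod>k<d. exp (l * y k / sqrt d) + exp (- (l * y k / sqrt d)))"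
proof -
  have "(\<Prod>k<d. exp (l * y k / sqrt d) + exp (- (l * y k / sqrt d)))
      = (\<Prod>k<d. \<Sum>s\<in>{- 1 / sqrt (real d), 1 / sqrt (real d)}. exp (l * y k * s))"
    using assms by (intro prod.cong) (auto simp: add.commute)
  also have "\<dots> = (\<Sum>w\<in>sign_cube d. \<Prod>k<d. exp (l * y k * w k))"
    unfolding sign_cube_def by (rule prod_sum_PiE) auto
  also have "\<dots> = (\<Sum>w\<in>sign_cube d. exp (l * ip d y w))"
    by (intro sum.cong refl) (simp add: ip_def sum_distrib_left exp_sum mult.assoc)
  finally show ?thesis ..
qed

text \<open>Chernoff's method with \<open>\<lambda> = t d\<close>.\<close>

lemma card_sign_cube_ip_ge:
  assumes d: "d > 0" and y: "(\<Sum>k<d. (y k)\<^sup>2) \<le> 1" and t: "t \<ge> 0"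
  shows "real (card {w\<in>sign_cube d. t \<le> ip d y w}) \<le> 2 ^ d * exp (- (t\<^sup>2 * d / 2))"
proof -
  define l where "l = t * d"
  have l: "l \<ge> 0"
    using t by (simp add: l_def)
  have "real (card {w\<in>sign_cube d. t \<le> ip d y w}) * exp (l * t)
      = (\<Sum>w\<in>{w\<in>sign_cube d. t \<le> ip d y w}. exp (l * t))"
    by simp
  also have "\<dots> \<le> (\<Sum>w\<in>{w\<in>sign_cube d. t \<le> ip d y w}. exp (l * ip d y w))"
    using l by (intro sum_mono) (auto intro: mult_left_mono)
  also have "\<dots> \<le> (\<Sum>w\<in>sign_cube d. exp (l * ip d y w))"
    by (intro sum_mono2 finite_sign_cube) auto
  also have "\<dots> = (\<Prod>k<d. exp (l * y k / sqrt d) + exp (- (l * y k / sqrt d)))"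
    by (rule sum_sign_cube_exp_ip[OF d])
  also have "\<dots> \<le> (\<Prod>k<d. 2 * exp ((l * y k / sqrt d)\<^sup>2 / 2))"
    by (intro prod_mono) (auto intro: exp_plus_exp_minus_le add_nonneg_nonneg)
  also have "\<dots> = 2 ^ d * exp (\<Sum>k<d. (l * y k / sqrt d)\<^sup>2 / 2)"
    by (simp add: prod.distrib exp_sum)
  also have "(\<Sum>k<d. (l * y k / sqrt d)\<^sup>2 / 2) = l\<^sup>2 / (2 * d) * (\<Sum>k<d. (y k)\<^sup>2)"
    using d by (simp add: sum_distrib_left power_divide power_mult_distrib mult.commute
        sum_divide_distrib)
  also have "\<dots> \<le> l\<^sup>2 / (2 * d)"
    using y by (intro mult_left_le) auto
  finally have "real (card {w\<in>sign_cube d. t \<le> ip d y w}) * exp (l * t)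
      \<le> 2 ^ d * exp (l\<^sup>2 / (2 * d))"
    by (smt (verit) exp_le_cancel_iff mult_left_mono zero_le_power)
  hence "real (card {w\<in>sign_cube d. t \<le> ip d y w}) \<le> 2 ^ d * exp (l\<^sup>2 / (2 * d) - l * t)"
    by (simp add: exp_diff field_simps)
  also have "l\<^sup>2 / (2 * d) - l * t = - (t\<^sup>2 * d / 2)"
    using d by (simp add: l_def field_simps power2_eq_square)
  finally show ?thesis .
qed

lemma card_sign_cube_abs_ip_ge:
  assumes d: "d > 0" and y: "(\<Sum>k<d. (y k)\<^sup>2) \<le> 1" and t: "t \<ge> 0"
  shows "real (card {w\<in>sign_cube d. t \<le> \<bar>ip d y w\<bar>})
    \<le> 2 * exp (- (t\<^sup>2 * d / 2)) * card (sign_cube d)"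
proof -
  have y': "(\<Sum>k<d. (- y k)\<^sup>2) \<le> 1"
    using y by simp
  have split: "{w\<in>sign_cube d. t \<le> \<bar>ip d y w\<bar>}
      = {w\<in>sign_cube d. t \<le> ip d y w} \<union> {w\<in>sign_cube d. t \<le> ip d (\<lambda>k. - y k) w}"
    by (auto simp: ip_def sum_negf)
  have "card {w\<in>sign_cube d. t \<le> \<bar>ip d y w\<bar>}
      \<le> card {w\<in>sign_cube d. t \<le> ip d y w} + card {w\<in>sign_cube d. t \<le> ip d (\<lambda>k. - y k) w}"
    unfolding split by (rule card_Un_le)
  hence "real (card {w\<in>sign_cube d. t \<le> \<bar>ip d y w\<bar>})
      \<le> real (card {w\<in>sign_cube d. t \<le> ip d y w})
        + real (card {w\<in>sign_cube d. t \<le> ip d (\<lambda>k. - y k) w})"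
    by linarith
  also have "\<dots> \<le> 2 ^ d * exp (- (t\<^sup>2 * d / 2)) + 2 ^ d * exp (- (t\<^sup>2 * d / 2))"
    by (intro add_mono card_sign_cube_ip_ge[OF d y t] card_sign_cube_ip_ge[OF d y' t])
  finally show ?thesis
    using card_sign_cube[OF d] by (simp add: mult_ac)
qed

lemma card_PiE_filter_le:
  fixes Q :: "('i \<Rightarrow> 'a) \<Rightarrow> bool" and b :: real
  assumes fin: "finite I" "\<And>i. i \<in> I \<Longrightarrow> finite (S i)" and j: "j \<in> I"
    and b: "\<And>g. g \<in> PiE (I - {j}) S \<Longrightarrow> real (card {w\<in>S j. Q (g(j := w))}) \<le> b * card (S j)"
  shows "real (card {V\<in>PiE I S. Q V}) \<le> b * card (PiE I S)"
proof -
  define X where "X = Sigma (PiE (I - {j}) S) (\<lambda>g. {w\<in>S j. Q (g(j := w))})"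
  have fin_rest: "finite (PiE (I - {j}) S)"
    using fin by (intro finite_PiE) auto
  have "{V\<in>PiE I S. Q V} \<subseteq> (\<lambda>(g, w). g(j := w)) ` X"
  proof
    fix V assume V: "V \<in> {V\<in>PiE I S. Q V}"
    have "V(j := undefined) \<in> PiE (I - {j}) S"
      using V j by (auto simp: PiE_def extensional_def Pi_def)
    moreover have "V j \<in> S j"
      using V j by auto
    ultimately have "(V(j := undefined), V j) \<in> X"
      using V by (simp add: X_def)
    thus "V \<in> (\<lambda>(g, w). g(j := w)) ` X"
      by force
  qed
  moreover have fin_X: "finite X"
    unfolding X_def using fin_rest fin j by (intro finite_SigmaI) auto
  ultimately have "card {V\<in>PiE I S. Q V} \<le> card ((\<lambda>(g, w). g(j := w)) ` X)"
    by (intro card_mono finite_imageI)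
  also have "\<dots> \<le> card X"
    by (rule card_image_le[OF fin_X])
  also have "card X = (\<Sum>g\<in>PiE (I - {j}) S. card {w\<in>S j. Q (g(j := w))})"
    unfolding X_def using fin_rest fin j by (subst card_SigmaI) auto
  finally have "real (card {V\<in>PiE I S. Q V})
      \<le> (\<Sum>g\<in>PiE (I - {j}) S. real (card {w\<in>S j. Q (g(j := w))}))"
    by (simp flip: of_nat_sum)
  also have "\<dots> \<le> (\<Sum>g\<in>PiE (I - {j}) S. b * card (S j))"
    by (intro sum_mono b)
  also have "\<dots> = b * (card (S j) * card (PiE (I - {j}) S))"
    by simp
  also have "card (S j) * card (PiE (I - {j}) S) = card (PiE I S)"
    using fin j by (simp add: card_PiE prod.remove)
  finally show ?thesis
    by simp
qed

lemma abs_ip_le_1: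
  assumes "(\<Sum>k<d. (x k)\<^sup>2) \<le> 1" "(\<Sum>k<d. (y k)\<^sup>2) \<le> 1"
  shows "\<bar>ip d x y\<bar> \<le> 1"
proof -
  have "\<bar>ip d x y\<bar> \<le> (\<Sum>k<d. \<bar>x k * y k\<bar>)"
    unfolding ip_def by (rule sum_abs)
  also have "\<dots> \<le> (\<Sum>k<d. ((x k)\<^sup>2 + (y k)\<^sup>2) / 2)"
  proof (intro sum_mono)
    fix k
    have "0 \<le> (\<bar>x k\<bar> - \<bar>y k\<bar>)\<^sup>2"
      by simp
    thus "\<bar>x k * y k\<bar> \<le> ((x k)\<^sup>2 + (y k)\<^sup>2) / 2"
      by (simp add: power2_eq_square algebra_simps abs_mult)
  qed
  also have "\<dots> = ((\<Sum>k<d. (x k)\<^sup>2) + (\<Sum>k<d. (y k)\<^sup>2)) / 2"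
    by (simp add: sum.distrib flip: sum_divide_distrib)
  finally show ?thesis
    using assms by simp
qed

lemma gam_pos: "d \<ge> 2 \<Longrightarrow> gam \<delta> d > 0"
  unfolding gam_def by (intro divide_pos_pos) auto

text \<open>The oracle of \<open>F\<close> with only \<open>v\<^sub>1, \<dots>, v\<^sub>n\<close> in the second maximum; \<open>n = N\<close> gives the true
  oracle.\<close>

definition Vmax_upto :: "real \<Rightarrow> nat \<Rightarrow> nat \<Rightarrow> (nat \<Rightarrow> nat \<Rightarrow> real) \<Rightarrow> (nat \<Rightarrow> real) \<Rightarrow> real" where
  "Vmax_upto \<delta> d n V x = Max ((\<lambda>i. ip d (V i) x - real i * gam \<delta> d) ` {1..n})"

definition subg_upto :: "real \<Rightarrow> nat \<Rightarrow> nat \<Rightarrow> (nat \<Rightarrow> nat \<Rightarrow> real) \<Rightarrow> (nat \<Rightarrow> nat \<Rightarrow> real) \<Rightarrow>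
    (nat \<Rightarrow> real) \<Rightarrow> (nat \<Rightarrow> real)" where
  "subg_upto \<delta> d n A V x =
    (if LL d * Ainf d A x - 1 \<ge> Vmax_upto \<delta> d n V x then
       (let j = (LEAST j. j < d div 2 \<and> \<bar>ip d (row A j) x\<bar> = Ainf d A x);
            s = (if ip d (row A j) x \<ge> 0 then 1 else -1)
        in (\<lambda>k. if k < d then s * A j k / sqrt (real d) else 0))
     else
       (let i = (LEAST i. i \<in> {1..n} \<and> ip d (V i) x - real i * gam \<delta> d = Vmax_upto \<delta> d n V x)
        in (\<lambda>k. if k < d then V i k / (sqrt (real d) * LL d) else 0)))"

definition answer_upto :: "real \<Rightarrow> nat \<Rightarrow> nat \<Rightarrow> (nat \<Rightarrow> nat \<Rightarrow> real) \<Rightarrow> (nat \<Rightarrow> nat \<Rightarrow> real) \<Rightarrow>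
    (nat \<Rightarrow> real) \<Rightarrow> real \<times> (nat \<Rightarrow> real)" where
  "answer_upto \<delta> d n A V x =
    (1 / (sqrt (real d) * LL d) * max (LL d * Ainf d A x - 1) (Vmax_upto \<delta> d n V x),
     subg_upto \<delta> d n A V x)"

fun hist_upto :: "((real \<times> (nat \<Rightarrow> real)) list \<Rightarrow> (nat \<Rightarrow> real)) \<Rightarrow> real \<Rightarrow> nat \<Rightarrow> nat \<Rightarrow>
    (nat \<Rightarrow> nat \<Rightarrow> real) \<Rightarrow> (nat \<Rightarrow> nat \<Rightarrow> real) \<Rightarrow> nat \<Rightarrow> (real \<times> (nat \<Rightarrow> real)) list" where
  "hist_upto ALG \<delta> d n A V 0 = []"
| "hist_upto ALG \<delta> d n A V (Suc t) =
    hist_upto ALG \<delta> d n A V t @ [answer_upto \<delta> d n A V (ALG (hist_upto ALG \<delta> d n A V t))]"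

definition query_upto :: "((real \<times> (nat \<Rightarrow> real)) list \<Rightarrow> (nat \<Rightarrow> real)) \<Rightarrow> real \<Rightarrow> nat \<Rightarrow> nat \<Rightarrow>
    (nat \<Rightarrow> nat \<Rightarrow> real) \<Rightarrow> (nat \<Rightarrow> nat \<Rightarrow> real) \<Rightarrow> nat \<Rightarrow> (nat \<Rightarrow> real)" where
  "query_upto ALG \<delta> d n A V t = ALG (hist_upto ALG \<delta> d n A V (t - 1))"

lemma answer_eq_answer_upto: "answer \<delta> d A V x = answer_upto \<delta> d (Nn \<delta> d) A V x"
  by (simp add: answer_def answer_upto_def Fhard_def subg_def subg_upto_def Vmax_def Vmax_upto_def)

lemma answer_upto_cong:
  assumes n: "1 \<le> n" and eq: "\<And>i. i \<in> {1..n} \<Longrightarrow> V i = V' i"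
  shows "answer_upto \<delta> d n A V = answer_upto \<delta> d n A V'"
proof
  fix x
  have Vmax: "Vmax_upto \<delta> d n V' x = Vmax_upto \<delta> d n V x"
    unfolding Vmax_upto_def using eq by (intro arg_cong[where f = Max] image_cong) auto
  define P where "P i \<longleftrightarrow> i \<in> {1..n} \<and> ip d (V i) x - real i * gam \<delta> d = Vmax_upto \<delta> d n V x"
    for i
  have P_V: "(\<lambda>i. i \<in> {1..n} \<and> ip d (V i) x - real i * gam \<delta> d = Vmax_upto \<delta> d n V x) = P"
    by (rule ext) (simp add: P_def)
  have P_V': "(\<lambda>i. i \<in> {1..n} \<and> ip d (V' i) x - real i * gam \<delta> d = Vmax_upto \<delta> d n V x) = P"
    by (rule ext) (auto simp: P_def eq)
  have "Vmax_upto \<delta> d n V x \<in> (\<lambda>i. ip d (V i) x - real i * gam \<delta> d) ` {1..n}"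
    unfolding Vmax_upto_def using n by (intro Max_in) auto
  hence "\<exists>i. P i"
    by (force simp: P_def)
  hence "P (Least P)"
    by (rule LeastI_ex)
  hence V_eq: "V (Least P) = V' (Least P)"
    using eq by (simp add: P_def)
  show "answer_upto \<delta> d n A V x = answer_upto \<delta> d n A V' x"
    unfolding answer_upto_def subg_upto_def Let_def P_V P_V' Vmax V_eq ..
qed

lemma query_upto_cong:
  assumes "1 \<le> n" "\<And>i. i \<in> {1..n} \<Longrightarrow> V i = V' i"
  shows "query_upto ALG \<delta> d n A V t = query_upto ALG \<delta> d n A V' t"
proof -
  have "hist_upto ALG \<delta> d n A V s = hist_upto ALG \<delta> d n A V' s" for s
  proof (induction s)
    case (Suc s)
    thus ?case
      using answer_upto_cong[OF assms] by simp
  qed simp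
  thus ?thesis
    by (simp add: query_upto_def)
qed

lemma Vmax_upto_le_1:
  assumes "d \<ge> 2" "1 \<le> n" "n \<le> Nn \<delta> d" "V \<in> Vspace \<delta> d" "(\<Sum>k<d. (x k)\<^sup>2) \<le> 1"
  shows "Vmax_upto \<delta> d n V x \<le> 1"
  unfolding Vmax_upto_def
proof (subst Max_le_iff, safe)
  fix i assume i: "i \<in> {1..n}"
  hence "V i \<in> sign_cube d"
    using assms by (auto simp: Vspace_eq_PiE_sign_cube)
  hence "\<bar>ip d (V i) x\<bar> \<le> 1"
    using assms sum_squares_sign_cube by (intro abs_ip_le_1) auto
  moreover have "real i * gam \<delta> d \<ge> 0"
    using gam_pos[OF assms(1), of \<delta>] by simp
  ultimately show "ip d (V i) x - real i * gam \<delta> d \<le> 1"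
    by linarith
qed (use assms in auto)

text \<open>Since \<open>\<parallel>x\<parallel> \<le> 1\<close> and \<open>\<parallel>v\<^sub>i\<parallel> = 1\<close>, the second maximum is at most \<open>1 < L\<parallel>Ax\<parallel>\<^sub>\<infinity> - 1\<close>.\<close>

lemma answer_upto_eq_if_far:
  assumes "d \<ge> 2" "1 \<le> n" "n \<le> Nn \<delta> d" "V \<in> Vspace \<delta> d" "(\<Sum>k<d. (x k)\<^sup>2) \<le> 1"
    and far: "xi d < Ainf d A x"
  shows "answer_upto \<delta> d (Nn \<delta> d) A V x = answer_upto \<delta> d n A V x"
proof -
  have "LL d * xi d < LL d * Ainf d A x"
    using far by (simp add: LL_def)
  hence "1 < LL d * Ainf d A x - 1"
    by (simp add: xi_def LL_def)
  moreover have "Vmax_upto \<delta> d (Nn \<delta> d) V x \<le> 1" "Vmax_upto \<delta> d n V x \<le> 1"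
    using assms by (auto intro!: Vmax_upto_le_1)
  ultimately show ?thesis
    by (simp add: answer_upto_def subg_upto_def max_def)
qed

lemma Max_image_truncate:
  fixes f :: "nat \<Rightarrow> 'a::linorder"
  assumes n: "1 \<le> n" "n \<le> N" and later: "\<And>j. j \<in> {n<..N} \<Longrightarrow> f j < f n"
  shows "Max (f ` {1..N}) = Max (f ` {1..n})"
    and "i \<in> {1..N} \<and> f i = Max (f ` {1..n}) \<longleftrightarrow> i \<in> {1..n} \<and> f i = Max (f ` {1..n})"
proof -
  have le: "f n \<le> Max (f ` {1..n})"
    using n by (intro Max_ge) auto
  show "Max (f ` {1..N}) = Max (f ` {1..n})"
  proof (rule Max_eqI)
    fix y assume "y \<in> f ` {1..N}"
    then obtain i where "i \<in> {1..N}" "y = f i"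
      by auto
    thus "y \<le> Max (f ` {1..n})"
      using later[of i] le by (cases "i \<le> n") auto
  next
    have "Max (f ` {1..n}) \<in> f ` {1..n}"
      using n by (intro Max_in) auto
    moreover have "f ` {1..n} \<subseteq> f ` {1..N}"
      using n by (intro image_mono) auto
    ultimately show "Max (f ` {1..n}) \<in> f ` {1..N}"
      by blast
  qed simp
  show "i \<in> {1..N} \<and> f i = Max (f ` {1..n}) \<longleftrightarrow> i \<in> {1..n} \<and> f i = Max (f ` {1..n})"
  proof (cases "i \<le> n")
    case False
    thus ?thesis
      using later[of i] le by auto
  qed (use n in auto)
qed

text \<open>If \<open>|\<langle>v\<^sub>j, x\<rangle>| < \<gamma>/4\<close> for \<open>j \<ge> n\<close>, the offset \<open>j\<gamma>\<close> lets \<open>v\<^sub>n\<close> beat every \<open>v\<^sub>j\<close>, \<open>j > n\<close>.\<close>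

lemma answer_upto_eq_if_uncorrelated:
  assumes "d \<ge> 2" and n: "1 \<le> n" "n \<le> Nn \<delta> d"
    and small: "\<forall>j\<in>{n..Nn \<delta> d}. \<bar>ip d x (V j)\<bar> < gam \<delta> d / 4"
  shows "answer_upto \<delta> d (Nn \<delta> d) A V x = answer_upto \<delta> d n A V x"
proof -
  define f where "f i = ip d (V i) x - real i * gam \<delta> d" for i
  have g: "gam \<delta> d > 0"
    using gam_pos assms by blast
  have later: "f j < f n" if j: "j \<in> {n<..Nn \<delta> d}" for j
  proof -
    have "(real n + 1) * gam \<delta> d \<le> real j * gam \<delta> d"
      using j g by (intro mult_right_mono) auto
    moreover have "\<bar>ip d (V j) x\<bar> < gam \<delta> d / 4" "\<bar>ip d (V n) x\<bar> < gam \<delta> d / 4"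
      using j n small by (auto simp: ip_def mult.commute)
    ultimately show ?thesis
      unfolding f_def using g by (simp add: algebra_simps)
  qed
  have "Vmax_upto \<delta> d (Nn \<delta> d) V x = Vmax_upto \<delta> d n V x"
    using Max_image_truncate(1)[of n "Nn \<delta> d" f, OF n later] by (simp add: Vmax_upto_def f_def)
  moreover have "(\<lambda>i. i \<in> {1..Nn \<delta> d} \<and> ip d (V i) x - real i * gam \<delta> d = Vmax_upto \<delta> d n V x)
      = (\<lambda>i. i \<in> {1..n} \<and> ip d (V i) x - real i * gam \<delta> d = Vmax_upto \<delta> d n V x)"
    using Max_image_truncate(2)[of n "Nn \<delta> d" f, OF n later] by (simp add: Vmax_upto_def f_def)
  ultimately show ?thesis
    by (simp add: answer_upto_def subg_upto_def)
qed

lemma hist_eq_hist_upto_while_uncorrelated: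
  assumes "d \<ge> 2" "1 \<le> n" "n \<le> Nn \<delta> d" "V \<in> Vspace \<delta> d" and ball: "queries_in_ball d ALG"
    and uncorrelated: "\<And>u. u \<in> {1..s} \<Longrightarrow> xi d < Ainf d A (query ALG \<delta> d A V u) \<or>
      (\<forall>j\<in>{n..Nn \<delta> d}. \<bar>ip d (query ALG \<delta> d A V u) (V j)\<bar> < gam \<delta> d / 4)"
  shows "hist ALG \<delta> d A V s = hist_upto ALG \<delta> d n A V s"
  using uncorrelated
proof (induction s)
  case (Suc s)
  define x where "x = ALG (hist ALG \<delta> d A V s)"
  have "xi d < Ainf d A x \<or> (\<forall>j\<in>{n..Nn \<delta> d}. \<bar>ip d x (V j)\<bar> < gam \<delta> d / 4)"
    using Suc.prems[of "Suc s"] by (simp add: x_def query_def)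
  moreover have "(\<Sum>k<d. (x k)\<^sup>2) \<le> 1"
    using ball by (simp add: queries_in_ball_def x_def)
  ultimately have "answer \<delta> d A V x = answer_upto \<delta> d n A V x"
    unfolding answer_eq_answer_upto
    using answer_upto_eq_if_far[OF assms(1-4)] answer_upto_eq_if_uncorrelated[OF assms(1-3)]
    by (elim disjE) blast+
  moreover have "hist ALG \<delta> d A V s = hist_upto ALG \<delta> d n A V s"
    using Suc by auto
  ultimately show ?case
    by (simp add: x_def)
qed simp

lemma corr_time_le:
  "s \<in> {1..T} \<Longrightarrow> correlated ALG \<delta> d A V m s \<Longrightarrow> corr_time ALG T \<delta> d A V m \<le> enat s"
  unfolding corr_time_def by (auto intro: Least_le)

lemma correlated_if_corr_time_less:
  assumes "corr_time ALG T \<delta> d A V m < c"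
  obtains t where "t \<in> {1..T}" "correlated ALG \<delta> d A V m t" "enat t < c"
proof -
  have ex: "\<exists>t\<in>{1..T}. correlated ALG \<delta> d A V m t"
    using assms by (auto simp: corr_time_def split: if_splits)
  define t where "t = (LEAST t. t \<in> {1..T} \<and> correlated ALG \<delta> d A V m t)"
  have "t \<in> {1..T} \<and> correlated ALG \<delta> d A V m t"
    unfolding t_def by (rule LeastI_ex) (use ex in blast)
  moreover have "corr_time ALG T \<delta> d A V m = enat t"
    using ex by (simp add: corr_time_def t_def)
  ultimately show ?thesis
    using assms that by auto
qed

text \<open>Take \<open>s\<close> minimal such that query \<open>s\<close> is close to the kernel of \<open>A\<close> and correlated with
  some \<open>v\<^sub>j\<close>, \<open>j \<ge> i\<close>. The earlier queries are simulated with \<open>v\<^sub>1, \<dots>, v\<^sub>i\<close> only, and \<open>j = i\<close>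
  would force \<open>t\<^sub>i \<le> s \<le> t\<^sub>i\<^sub>+\<^sub>1\<close>.\<close>

lemma early_correlation_if_not_ordered_times:
  assumes d: "d \<ge> 2" and V: "V \<in> Vspace \<delta> d" and ball: "queries_in_ball d ALG"
    and "\<not> ordered_times ALG T \<delta> d A V"
  shows "\<exists>i\<in>{1..<Nn \<delta> d}. \<exists>u\<in>{1..T}. \<exists>j\<in>{i<..Nn \<delta> d}.
           gam \<delta> d / 4 \<le> \<bar>ip d (query_upto ALG \<delta> d i A V u) (V j)\<bar>"
proof -
  let ?q = "query ALG \<delta> d A V"
  obtain i where i: "1 \<le> i" "i < Nn \<delta> d"
    and less: "corr_time ALG T \<delta> d A V (Suc i) < corr_time ALG T \<delta> d A V i"
    using assms(4) unfolding ordered_times_def by (auto simp: not_le)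
  obtain t where t: "t \<in> {1..T}" "correlated ALG \<delta> d A V (Suc i) t"
    and t_less: "enat t < corr_time ALG T \<delta> d A V i"
    using less by (rule correlated_if_corr_time_less)
  define P where "P u \<longleftrightarrow> u \<in> {1..T} \<and> Ainf d A (?q u) \<le> xi d \<and>
    (\<exists>j\<in>{i..Nn \<delta> d}. gam \<delta> d / 4 \<le> \<bar>ip d (?q u) (V j)\<bar>)" for u
  have "P t"
    using t i unfolding P_def correlated_def Let_def by (auto intro!: bexI[of _ "Suc i"])
  define s where "s = (LEAST u. P u)"
  have "P s"
    unfolding s_def using \<open>P t\<close> by (rule LeastI)
  have "s \<le> t"
    unfolding s_def using \<open>P t\<close> by (rule Least_le)
  from \<open>P s\<close> obtain j where s: "s \<in> {1..T}" "Ainf d A (?q s) \<le> xi d"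
    and j: "j \<in> {i..Nn \<delta> d}" "gam \<delta> d / 4 \<le> \<bar>ip d (?q s) (V j)\<bar>"
    unfolding P_def by auto
  have "hist ALG \<delta> d A V (s - 1) = hist_upto ALG \<delta> d i A V (s - 1)"
  proof (rule hist_eq_hist_upto_while_uncorrelated[OF d i(1) _ V ball])
    fix u assume "u \<in> {1..s - 1}"
    moreover from this have "\<not> P u"
      unfolding s_def by (intro not_less_Least) auto
    ultimately show "xi d < Ainf d A (?q u) \<or>
      (\<forall>j\<in>{i..Nn \<delta> d}. \<bar>ip d (?q u) (V j)\<bar> < gam \<delta> d / 4)"
      using \<open>s \<le> t\<close> t(1) unfolding P_def by (auto simp: not_le)
  qed (use i in simp)
  hence q_eq: "?q s = query_upto ALG \<delta> d i A V s"
    by (simp add: query_def query_upto_def)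
  have "j \<noteq> i"
  proof
    assume "j = i"
    hence "correlated ALG \<delta> d A V i s"
      using s j unfolding correlated_def by simp
    hence "corr_time ALG T \<delta> d A V i \<le> enat s"
      by (rule corr_time_le[OF s(1)])
    also have "\<dots> \<le> enat t"
      using \<open>s \<le> t\<close> by simp
    finally show False
      using t_less by simp
  qed
  thus ?thesis
    using i s(1) j q_eq by (intro bexI[of _ i] bexI[of _ s] bexI[of _ j]) auto
qed

text \<open>The simulated query with \<open>n = i\<close> does not depend on \<open>v\<^sub>j\<close>, \<open>j > i\<close>: condition on the other
  vectors and apply Hoeffding's bound to \<open>v\<^sub>j\<close> alone.\<close>

lemma card_correlated_le:
  assumes d: "d \<ge> 2" and ball: "queries_in_ball d ALG" and ij: "1 \<le> i" "i < j" "j \<le> Nn \<delta> d"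
  shows "real (card {V\<in>Vspace \<delta> d. gam \<delta> d / 4 \<le> \<bar>ip d (query_upto ALG \<delta> d i A V u) (V j)\<bar>})
    \<le> 2 * exp (- ((gam \<delta> d / 4)\<^sup>2 * d / 2)) * card (Vspace \<delta> d)"
  unfolding Vspace_eq_PiE_sign_cube
proof (rule card_PiE_filter_le)
  fix g assume "g \<in> PiE ({1..Nn \<delta> d} - {j}) (\<lambda>_. sign_cube d)"
  define y where "y = query_upto ALG \<delta> d i A g u"
  have y: "query_upto ALG \<delta> d i A (g(j := w)) u = y" for w
    unfolding y_def using ij by (intro query_upto_cong) auto
  have "(\<Sum>k<d. (y k)\<^sup>2) \<le> 1"
    using ball by (simp add: queries_in_ball_def y_def query_upto_def)
  moreover have "gam \<delta> d / 4 \<ge> 0"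
    using gam_pos[OF d, of \<delta>] by simp
  ultimately show "real (card {w\<in>sign_cube d.
      gam \<delta> d / 4 \<le> \<bar>ip d (query_upto ALG \<delta> d i A (g(j := w)) u) ((g(j := w)) j)\<bar>})
    \<le> 2 * exp (- ((gam \<delta> d / 4)\<^sup>2 * d / 2)) * card (sign_cube d)"
    unfolding y fun_upd_same using d by (intro card_sign_cube_abs_ip_ge) auto
qed (use ij finite_sign_cube in auto)

lemma prob_not_ordered_times_le:
  assumes d: "d \<ge> 2" and ball: "queries_in_ball d ALG"
  shows "measure_pmf.prob (pmf_of_set (Vspace \<delta> d)) {V. \<not> ordered_times ALG T \<delta> d A V}
    \<le> real (Nn \<delta> d) ^ 2 * real T * (2 * exp (- ((gam \<delta> d / 4)\<^sup>2 * d / 2)))"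
proof -
  define N where "N = Nn \<delta> d"
  define b where "b = 2 * exp (- ((gam \<delta> d / 4)\<^sup>2 * d / 2))"
  define I where "I = {(i, u, j). i \<in> {1..<N} \<and> u \<in> {1..T} \<and> j \<in> {i<..N}}"
  define B where "B = (\<lambda>(i, u, j).
    {V\<in>Vspace \<delta> d. gam \<delta> d / 4 \<le> \<bar>ip d (query_upto ALG \<delta> d i A V u) (V j)\<bar>})"
  have fin: "finite (Vspace \<delta> d)"
    unfolding Vspace_eq_PiE_sign_cube by (intro finite_PiE finite_sign_cube) auto
  have nonempty: "Vspace \<delta> d \<noteq> {}"
    unfolding Vspace_eq_PiE_sign_cube using d by (auto simp: PiE_eq_empty_iff sign_cube_def)
  have I_sub: "I \<subseteq> {1..N} \<times> {1..T} \<times> {1..N}"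
    by (auto simp: I_def)
  hence fin_I: "finite I"
    by (rule finite_subset) auto
  have "card I \<le> card ({1..N} \<times> {1..T} \<times> {1..N})"
    using I_sub by (intro card_mono) auto
  hence "real (card I) \<le> real (N * (T * N))"
    by (simp only: of_nat_le_iff card_cartesian_product card_atLeastAtMost) simp
  hence card_I: "real (card I) \<le> real N ^ 2 * real T"
    by (simp add: power2_eq_square mult_ac)
  have B_sub: "B k \<subseteq> Vspace \<delta> d" for k
    by (auto simp: B_def split: prod.splits)
  have "Vspace \<delta> d \<inter> {V. \<not> ordered_times ALG T \<delta> d A V} \<subseteq> (\<Union>k\<in>I. B k)"
  proof
    fix V assume V: "V \<in> Vspace \<delta> d \<inter> {V. \<not> ordered_times ALG T \<delta> d A V}"
    hence "\<exists>i\<in>{1..<N}. \<exists>u\<in>{1..T}. \<exists>j\<in>{i<..N}.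
        gam \<delta> d / 4 \<le> \<bar>ip d (query_upto ALG \<delta> d i A V u) (V j)\<bar>"
      unfolding N_def using early_correlation_if_not_ordered_times[OF d _ ball] by simp
    then obtain i u j where "i \<in> {1..<N}" "u \<in> {1..T}" "j \<in> {i<..N}"
      "gam \<delta> d / 4 \<le> \<bar>ip d (query_upto ALG \<delta> d i A V u) (V j)\<bar>"
      by blast
    thus "V \<in> (\<Union>k\<in>I. B k)"
      using V by (intro UN_I[of "(i, u, j)"]) (auto simp: I_def B_def)
  qed
  moreover have "finite (\<Union>k\<in>I. B k)"
    using B_sub fin by (blast intro: finite_subset)
  ultimately have "card (Vspace \<delta> d \<inter> {V. \<not> ordered_times ALG T \<delta> d A V}) \<le> card (\<Union>k\<in>I. B k)"
    by (rule card_mono[rotated])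
  also have "\<dots> \<le> (\<Sum>k\<in>I. card (B k))"
    by (rule card_UN_le[OF fin_I])
  finally have "real (card (Vspace \<delta> d \<inter> {V. \<not> ordered_times ALG T \<delta> d A V}))
      \<le> (\<Sum>k\<in>I. real (card (B k)))"
    by (simp flip: of_nat_sum)
  also have "\<dots> \<le> real (card I) * (b * card (Vspace \<delta> d))"
  proof (rule sum_bounded_above)
    fix k assume "k \<in> I"
    then obtain i u j where "k = (i, u, j)" "1 \<le> i" "i < j" "j \<le> N"
      by (auto simp: I_def)
    thus "real (card (B k)) \<le> b * card (Vspace \<delta> d)"
      using card_correlated_le[OF d ball, of i j \<delta> A u] by (simp add: B_def b_def N_def)
  qed
  also have "\<dots> \<le> real N ^ 2 * real T * (b * card (Vspace \<delta> d))"
    using card_I by (intro mult_right_mono) (auto simp: b_def)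
  finally have "real (card (Vspace \<delta> d \<inter> {V. \<not> ordered_times ALG T \<delta> d A V})) / card (Vspace \<delta> d)
      \<le> real N ^ 2 * real T * b"
    using fin nonempty by (subst pos_divide_le_eq) (auto simp: card_gt_0_iff)
  thus ?thesis
    using fin nonempty by (simp add: measure_pmf_of_set N_def b_def)
qed

lemma ln_ge_1: "d \<ge> 3 \<Longrightarrow> ln (real d) \<ge> 1"
  using exp_le by (subst ln_ge_iff) auto

lemma Nn_le: assumes "d \<ge> 3" "\<delta> < 1" shows "real (Nn \<delta> d) \<le> real d"
proof -
  have "(ln (real d)) ^ 4 \<ge> 1"
    using ln_ge_1[OF assms(1)] by simp
  have "real (Nn \<delta> d) \<le> real d powr (\<delta> / 6) / (ln (real d)) ^ 4"
    unfolding Nn_def by simp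
  also have "\<dots> \<le> real d powr (\<delta> / 6)"
    using \<open>(ln (real d)) ^ 4 \<ge> 1\<close>
    by (simp add: divide_le_eq) (smt (verit) mult_le_cancel_left1 powr_ge_zero)
  also have "\<dots> \<le> real d powr 1"
    using assms by (intro powr_mono) auto
  finally show ?thesis
    using assms by simp
qed

lemma sqrt_le_gam_exponent:
  assumes "d \<ge> 3" "0 < \<delta>" "\<delta> < 1"
  shows "sqrt (real d) / 32 \<le> (gam \<delta> d / 4)\<^sup>2 * d / 2"
proof -
  have "(real d powr (\<delta> / 4))\<^sup>2 = real d powr (\<delta> / 2)"
    by (simp add: power2_eq_square flip: powr_add)
  also have "\<dots> \<le> real d powr (1 / 2)"
    using assms by (intro powr_mono) auto
  finally have pw: "(real d powr (\<delta> / 4))\<^sup>2 \<le> sqrt d"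
    by (simp add: powr_half_sqrt)
  have "sqrt d / 32 = d / (32 * sqrt d)"
    using assms by (simp add: field_simps)
  also have "\<dots> \<le> d / (32 * (real d powr (\<delta> / 4))\<^sup>2)"
    using pw assms by (intro divide_left_mono) auto
  also have "\<dots> \<le> (ln (real d)) ^ 4 * d / (32 * (real d powr (\<delta> / 4))\<^sup>2)"
    using mult_right_mono[of 1 "(ln (real d)) ^ 4" "real d"] ln_ge_1[OF assms(1)]
    by (intro divide_right_mono) auto
  also have "\<dots> = (gam \<delta> d / 4)\<^sup>2 * d / 2"
    unfolding gam_def by (simp add: field_simps power2_eq_square)
      (simp add: power4_eq_xxxx mult_ac)
  finally show ?thesis .
qed

lemma bound_le_exp_sqrt:
  assumes "d \<ge> 3" "0 < \<delta>" "\<delta> < 1" and T: "real T \<le> real d ^ 2"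
  shows "real (Nn \<delta> d) ^ 2 * real T * (2 * exp (- ((gam \<delta> d / 4)\<^sup>2 * d / 2)))
    \<le> 2 * real d ^ 4 * exp (- (sqrt (real d) / 32))"
proof -
  have "real (Nn \<delta> d) ^ 2 * real T \<le> real d ^ 2 * real d ^ 2"
    using Nn_le[of d \<delta>] assms by (intro mult_mono power_mono) auto
  moreover have "exp (- ((gam \<delta> d / 4)\<^sup>2 * d / 2)) \<le> exp (- (sqrt (real d) / 32))"
    using sqrt_le_gam_exponent[OF assms(1-3)] by simp
  ultimately have "real (Nn \<delta> d) ^ 2 * real T * exp (- ((gam \<delta> d / 4)\<^sup>2 * d / 2))
      \<le> real d ^ 4 * exp (- (sqrt (real d) / 32))"
    by (intro mult_mono) (simp_all flip: power_add)
  thus ?thesis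
    by simp
qed

lemma eventually_exp_sqrt_le_powr:
  "eventually (\<lambda>d::nat. 2 * real d ^ 4 * exp (- (sqrt (real d) / 32)) \<le> real d powr (- c)) at_top"
proof -
  define a where "a = 5 + \<bar>c\<bar>"
  have a: "a > 0"
    by (simp add: a_def)
  have "eventually (\<lambda>d::nat. ln (real d) / real d powr (1 / 2) < 1 / (64 * a)) at_top"
    using order_tendstoD(2)[OF lim_ln_over_power[of "1 / 2"]] a by simp
  with eventually_ge_at_top[of 4096] show ?thesis
  proof eventually_elim
    case (elim d)
    have d: "real d > 0" "ln (real d) \<ge> 1"
      using elim ln_ge_1[of d] by auto
    have "ln (real d) / sqrt d < 1 / (64 * a)"
      using elim(2) by (simp add: powr_half_sqrt)
    hence "ln (real d) < sqrt d / (64 * a)"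
      using d a by (simp add: field_simps)
    hence "a * ln (real d) \<le> sqrt d / 64"
      using a by (simp add: field_simps)
    moreover have "(4 + c) * ln (real d) \<le> a * ln (real d)"
      using d by (intro mult_right_mono) (auto simp: a_def)
    moreover have "ln 2 \<le> sqrt d / 64"
    proof -
      have "sqrt (4096 :: real) \<le> sqrt d"
        using elim(1) by (intro real_sqrt_le_mono) simp
      moreover have "sqrt (4096 :: real) = 64"
        by (rule real_sqrt_unique) auto
      ultimately show ?thesis
        using ln_le_minus_one[of 2] by simp
    qed
    ultimately have "ln 2 + 4 * ln (real d) - sqrt d / 32 \<le> - c * ln (real d)"
      by (simp add: algebra_simps)
    have "2 * real d ^ 4 * exp (- (sqrt d / 32)) = exp (ln 2) * exp (4 * ln d) * exp (- (sqrt d / 32))"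
      using exp_of_nat_mult[of 4 "ln d"] d by simp
    also have "\<dots> = exp (ln 2 + 4 * ln d - sqrt d / 32)"
      by (simp only: diff_conv_add_uminus exp_add)
    also have "\<dots> \<le> exp (- c * ln d)"
      using \<open>ln 2 + 4 * ln (real d) - sqrt d / 32 \<le> - c * ln (real d)\<close> by simp
    also have "\<dots> = real d powr (- c)"
      using d by (simp add: powr_def)
    finally show ?case .
  qed
qed

lemma eventually_T_le_square:
  assumes "\<delta> < 1" and lim: "((\<lambda>d. 1 + \<delta> / 6 - ln (real (T d)) / ln (real d)) \<longlongrightarrow> 0) at_top"
  shows "eventually (\<lambda>d. real (T d) \<le> real d ^ 2) at_top"
proof -
  have "eventually (\<lambda>d. - (1 / 2) < 1 + \<delta> / 6 - ln (real (T d)) / ln (real d)) at_top"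
    using order_tendstoD(1)[OF lim] by simp
  with eventually_ge_at_top[of 3] show ?thesis
  proof eventually_elim
    case (elim d)
    show ?case
    proof (cases "T d = 0")
      case False
      have "ln (real (T d)) < (3 / 2 + \<delta> / 6) * ln d"
        using elim ln_ge_1[of d] by (simp add: field_simps)
      also have "\<dots> \<le> ln (real d ^ 2)"
        using assms ln_ge_1[of d] elim by (simp add: ln_realpow)
      finally show ?thesis
        using False elim by simp
    qed simp
  qed
qed

lemma prob_not_ordered_times_le_powr:
  assumes "d \<ge> 3" "0 < \<delta>" "\<delta> < 1" "real T \<le> real d ^ 2"
    and "2 * real d ^ 4 * exp (- (sqrt (real d) / 32)) \<le> real d powr (- c)"
    and "queries_in_ball d ALG"
  shows "measure_pmf.prob (pmf_of_set (Vspace \<delta> d)) {V. \<not> ordered_times ALG T \<delta> d A V}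
    \<le> real d powr (- c)"
proof -
  have "d \<ge> 2"
    using assms(1) by simp
  thus ?thesis
    using prob_not_ordered_times_le[OF _ assms(6)] bound_le_exp_sqrt[OF assms(1-4)] assms(5)
    by (meson order_trans)
qed

theorem lemma4p2:
  fixes \<delta> :: real and T :: "nat \<Rightarrow> nat"
  assumes "0 < \<delta>" and "\<delta> < 1"
    and "((\<lambda>d. 1 + \<delta>/6 - ln (real (T d)) / ln (real d)) \<longlongrightarrow> 0) at_top"
  shows "\<forall>c::real. \<exists>D::nat. \<forall>d \<ge> D. \<forall>A ALG.
           sign_matrix d A \<longrightarrow> queries_in_ball d ALG \<longrightarrow>
           measure_pmf.prob (pmf_of_set (Vspace \<delta> d))
             {V. \<not> ordered_times ALG (T d) \<delta> d A V} \<le> real d powr (- c)"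
proof
  fix c :: real
  have "eventually (\<lambda>d. d \<ge> 3 \<and> real (T d) \<le> real d ^ 2 \<and>
      2 * real d ^ 4 * exp (- (sqrt (real d) / 32)) \<le> real d powr (- c)) at_top"
    using eventually_ge_at_top[of 3] eventually_T_le_square[OF assms(2,3)]
      eventually_exp_sqrt_le_powr[of c]
    by eventually_elim simp
  then obtain D where D: "\<And>d. d \<ge> D \<Longrightarrow> d \<ge> 3 \<and> real (T d) \<le> real d ^ 2 \<and>
      2 * real d ^ 4 * exp (- (sqrt (real d) / 32)) \<le> real d powr (- c)"
    unfolding eventually_at_top_linorder by blast
  show "\<exists>D::nat. \<forall>d \<ge> D. \<forall>A ALG. sign_matrix d A \<longrightarrow> queries_in_ball d ALG \<longrightarrow>
      measure_pmf.prob (pmf_of_set (Vspace \<delta> d)) {V. \<not> ordered_times ALG (T d) \<delta> d A V}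
        \<le> real d powr (- c)"
  proof (intro exI[of _ D] allI impI)
    fix d A ALG assume "d \<ge> D" "queries_in_ball d ALG"
    with D[of d] show "measure_pmf.prob (pmf_of_set (Vspace \<delta> d))
        {V. \<not> ordered_times ALG (T d) \<delta> d A V} \<le> real d powr (- c)"
      using assms(1,2) by (intro prob_not_ordered_times_le_powr) auto
  qed
qed

end
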